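(* For every $k\ge1$, $$B_k'=\{[f,l]\mid f\in B_k,\ l\in G_k\}=\{[l,f]\mid f\in B_k,\ l\in G_k\}.$$
   Context: Let $C_2=\{e,\sigma\}$ with $\sigma=(1,2)$. Define $B_1=C_2$ and $B_k=B_{k-1}\wr C_2$ for $k>1$, with elements written as wreath recursions $(g_1,g_2)\pi$, $g_1,g_2\in B_{k-1}$, $\pi\in C_2$, and multiplication $(g_1,g_2)\pi\cdot(h_1,h_2)\rho=(g_1h_{\pi(1)},g_2h_{\pi(2)})\pi\rho$. Define $G_1=\{e\}$ and, for $k>1$, $G_k=\{(g_1,g_2)\pi\in B_k : g_1g_2\in G_{k-1}\}$. The commutator is $[a,b]=aba^{-1}b^{-1}$. *)

theory Defs
  imports "HOL-Algebra.Generated_Groups"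
begin

text \<open>Elements of the iterated wreath products: E is the (unique) element of the
trivial group B_0, and W g1 g2 p is the wreath recursion (g1,g2)pi, where
p = True means pi = sigma = (1,2) and p = False means pi = e.\<close>

datatype wr = E | W wr wr bool

fun inB :: "nat \<Rightarrow> wr \<Rightarrow> bool" where
  "inB 0 x = (x = E)"
| "inB (Suc k) x = (case x of E \<Rightarrow> False | W a b p \<Rightarrow> inB k a \<and> inB k b)"

fun wmult :: "wr \<Rightarrow> wr \<Rightarrow> wr" where
  "wmult (W g1 g2 p) (W h1 h2 q) =
     W (wmult g1 (if p then h2 else h1)) (wmult g2 (if p then h1 else h2)) (p \<noteq> q)"
| "wmult _ _ = E"

fun wone :: "nat \<Rightarrow> wr" where
  "wone 0 = E"
| "wone (Suc k) = W (wone k) (wone k) False"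

definition Bgrp :: "nat \<Rightarrow> wr monoid" where
  "Bgrp k = \<lparr> carrier = {x. inB k x}, mult = wmult, one = wone k \<rparr>"

fun Gset :: "nat \<Rightarrow> wr set" where
  "Gset 0 = {E}"
| "Gset (Suc 0) = {wone 1}"
| "Gset (Suc (Suc k)) = {x. inB (Suc (Suc k)) x \<and>
      (case x of E \<Rightarrow> False | W g1 g2 p \<Rightarrow> wmult g1 g2 \<in> Gset (Suc k))}"

end

theory Submission
  imports Defs
begin

text \<open>Reading off, for each level i, the parity of the number of vertices of level i at
which an element swaps its two subtrees gives homomorphisms B_k \<rightarrow> C_2, so B_k' lies in
their common kernel K_k. Conversely, (a,b) \<in> K_(k+1) forces ab \<in> K_k; by induction
ab = [f1,l'] with l' \<in> G_k, and then (a,b) = [(f1, a^-1 f1), (1,l')\<sigma>], where (1,l')\<sigma> \<in> G_(k+1).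
Thus K_k = B_k' and every element of it is a commutator [f,l] with l \<in> G_k; since
[f,l]^-1 = [l,f] and B_k' is closed under inverses, the same holds for [l,f].\<close>

lemma (in group) inv_commutator:
  "f \<in> carrier G \<Longrightarrow> l \<in> carrier G \<Longrightarrow>
     inv (f \<otimes> l \<otimes> inv f \<otimes> inv l) = l \<otimes> f \<otimes> inv l \<otimes> inv f"
  by (simp add: inv_mult_group m_assoc)

lemma (in group) commutator_in_derived:
  "f \<in> carrier G \<Longrightarrow> l \<in> carrier G \<Longrightarrow> f \<otimes> l \<otimes> inv f \<otimes> inv l \<in> derived G (carrier G)"
  unfolding derived_def by (rule generate.incl) blast

lemma (in group) derived_eq_commutator_sets:
  assumes L: "L \<subseteq> carrier G"
    and covered: "derived G (carrier G) \<subseteq> {f \<otimes> l \<otimes> inv f \<otimes> inv l | f l. f \<in> carrier G \<and> l \<in> L}"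
  shows "derived G (carrier G) = {f \<otimes> l \<otimes> inv f \<otimes> inv l | f l. f \<in> carrier G \<and> l \<in> L}
       \<and> derived G (carrier G) = {l \<otimes> f \<otimes> inv l \<otimes> inv f | f l. f \<in> carrier G \<and> l \<in> L}"
proof -
  have "derived G (carrier G) \<subseteq> {l \<otimes> f \<otimes> inv l \<otimes> inv f | f l. f \<in> carrier G \<and> l \<in> L}"
  proof
    fix x assume x: "x \<in> derived G (carrier G)"
    then have "inv x \<in> derived G (carrier G)"
      by (simp add: subgroup.m_inv_closed derived_is_subgroup)
    then obtain f l where f: "f \<in> carrier G" and l: "l \<in> L"
      and inv_x: "inv x = f \<otimes> l \<otimes> inv f \<otimes> inv l"
      using covered by blast
    have "x = inv (inv x)"
      using subsetD[OF derived_in_carrier[OF subset_refl] x] by simp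
    also have "\<dots> = l \<otimes> f \<otimes> inv l \<otimes> inv f"
      unfolding inv_x using inv_commutator[OF f subsetD[OF L l]] .
    finally show "x \<in> {l \<otimes> f \<otimes> inv l \<otimes> inv f | f l. f \<in> carrier G \<and> l \<in> L}"
      using f l by blast
  qed
  moreover have "{f \<otimes> l \<otimes> inv f \<otimes> inv l | f l. f \<in> carrier G \<and> l \<in> L} \<subseteq> derived G (carrier G)"
    using L by (auto intro!: commutator_in_derived)
  moreover have "{l \<otimes> f \<otimes> inv l \<otimes> inv f | f l. f \<in> carrier G \<and> l \<in> L} \<subseteq> derived G (carrier G)"
    using L by (auto intro!: commutator_in_derived)
  ultimately show ?thesis
    using covered by blast
qed

fun winv :: "wr \<Rightarrow> wr" where
  "winv E = E"
| "winv (W a b p) = (if p then W (winv b) (winv a) True else W (winv a) (winv b) False)"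

definition wcomm :: "wr \<Rightarrow> wr \<Rightarrow> wr" where
  "wcomm f l = wmult (wmult (wmult f l) (winv f)) (winv l)"

fun level_parity :: "wr \<Rightarrow> nat \<Rightarrow> bool" where
  "level_parity E i = False"
| "level_parity (W a b p) 0 = p"
| "level_parity (W a b p) (Suc i) = (level_parity a i \<noteq> level_parity b i)"

definition parity_kernel :: "nat \<Rightarrow> wr set" where
  "parity_kernel k = {x. inB k x \<and> (\<forall>i. \<not> level_parity x i)}"

lemma inB_wmult: "inB k x \<Longrightarrow> inB k y \<Longrightarrow> inB k (wmult x y)"
  by (induction k arbitrary: x y) (auto split: wr.splits)

lemma inB_wone: "inB k (wone k)"
  by (induction k) auto

lemma inB_winv: "inB k x \<Longrightarrow> inB k (winv x)"
  by (induction k arbitrary: x) (auto split: wr.splits)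

lemma wmult_assoc:
  "inB k x \<Longrightarrow> inB k y \<Longrightarrow> inB k z \<Longrightarrow> wmult (wmult x y) z = wmult x (wmult y z)"
  by (induction k arbitrary: x y z) (auto split: wr.splits)

lemma wmult_wone_left: "inB k x \<Longrightarrow> wmult (wone k) x = x"
  by (induction k arbitrary: x) (auto split: wr.splits)

lemma wmult_wone_right: "inB k x \<Longrightarrow> wmult x (wone k) = x"
  by (induction k arbitrary: x) (auto split: wr.splits)

lemma wmult_winv_left: "inB k x \<Longrightarrow> wmult (winv x) x = wone k"
  by (induction k arbitrary: x) (auto split: wr.splits)

lemma wmult_winv_cancel_left: "inB k x \<Longrightarrow> inB k y \<Longrightarrow> wmult (winv x) (wmult x y) = y"
  by (simp add: wmult_assoc[of k, symmetric] inB_winv wmult_winv_left wmult_wone_left)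

lemma carrier_Bgrp [simp]: "carrier (Bgrp k) = {x. inB k x}"
  and mult_Bgrp [simp]: "x \<otimes>\<^bsub>Bgrp k\<^esub> y = wmult x y"
  and one_Bgrp [simp]: "\<one>\<^bsub>Bgrp k\<^esub> = wone k"
  by (simp_all add: Bgrp_def)

lemma group_Bgrp: "group (Bgrp k)"
  by (rule groupI)
    (auto simp: inB_wmult inB_wone wmult_assoc wmult_wone_left
          intro: inB_winv wmult_winv_left)

lemma inv_Bgrp: "inB k x \<Longrightarrow> inv\<^bsub>Bgrp k\<^esub> x = winv x"
  using group.inv_equality[OF group_Bgrp] inB_winv wmult_winv_left
  by fastforce

lemma wmult_winv_right: "inB k x \<Longrightarrow> wmult x (winv x) = wone k"
  using group.r_inv[OF group_Bgrp, of x k] by (simp add: inv_Bgrp)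

lemma winv_wmult: "inB k x \<Longrightarrow> inB k y \<Longrightarrow> winv (wmult x y) = wmult (winv y) (winv x)"
  using group.inv_mult_group[OF group_Bgrp, of x k y] by (simp add: inv_Bgrp inB_wmult)

lemma winv_winv: "inB k x \<Longrightarrow> winv (winv x) = x"
  by (induction k arbitrary: x) (auto split: wr.splits)

lemma winv_wone: "winv (wone k) = wone k"
  by (induction k) auto

lemma level_parity_wmult:
  "inB k x \<Longrightarrow> inB k y \<Longrightarrow> level_parity (wmult x y) i = (level_parity x i \<noteq> level_parity y i)"
proof (induction k arbitrary: x y i)
  case (Suc k)
  then show ?case by (cases i) (auto split: wr.splits)
qed simp

lemma level_parity_wone: "\<not> level_parity (wone k) i"
  by (induction k arbitrary: i) (auto elim: level_parity.elims)

lemma level_parity_winv: "inB k x \<Longrightarrow> level_parity (winv x) i = level_parity x i"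
  using level_parity_wmult[OF inB_winv, of k x x i] wmult_winv_left[of k x] level_parity_wone
  by auto

lemma all_level_parity_W:
  "(\<forall>i. \<not> level_parity (W a b p) i) \<longleftrightarrow> \<not> p \<and> (\<forall>i. level_parity a i = level_parity b i)"
  by (metis level_parity.simps(2,3) not0_implies_Suc)

lemma W_in_parity_kernel_iff:
  "W a b p \<in> parity_kernel (Suc k) \<longleftrightarrow>
     inB k a \<and> inB k b \<and> \<not> p \<and> wmult a b \<in> parity_kernel k"
  by (auto simp: parity_kernel_def all_level_parity_W inB_wmult level_parity_wmult)

lemma subgroup_parity_kernel: "subgroup (parity_kernel k) (Bgrp k)"
  by (rule subgroup.intro)
    (auto simp: parity_kernel_def inv_Bgrp inB_wmult inB_wone inB_winv
                level_parity_wmult level_parity_wone level_parity_winv)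

lemma wcomm_in_parity_kernel: "inB k f \<Longrightarrow> inB k l \<Longrightarrow> wcomm f l \<in> parity_kernel k"
  by (auto simp: parity_kernel_def wcomm_def inB_wmult inB_winv level_parity_wmult[of k] level_parity_winv[of k])

lemma derived_Bgrp_subset_parity_kernel:
  "derived (Bgrp k) (carrier (Bgrp k)) \<subseteq> parity_kernel k"
proof -
  interpret group "Bgrp k" by (rule group_Bgrp)
  have "derived_set (Bgrp k) (carrier (Bgrp k)) \<subseteq> parity_kernel k"
    using wcomm_in_parity_kernel by (auto simp: inv_Bgrp wcomm_def)
  then show ?thesis
    unfolding derived_def by (rule generate_subgroup_incl[OF _ subgroup_parity_kernel])
qed

text \<open>[(f1,f2), (1,l)\<sigma>] = (f1 f2^-1, f2 l f1^-1 l^-1), and f2 = a^-1 f1 makes both coordinates match.\<close>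

lemma W_eq_wcomm:
  assumes "inB k a" "inB k b" "inB k f" "inB k l" and ab: "wmult a b = wcomm f l"
  shows "W a b False = wcomm (W f (wmult (winv a) f) False) (W (wone k) l True)"
proof -
  have "wmult f (winv (wmult (winv a) f)) = wmult (wmult f (winv f)) a"
    using assms by (simp add: winv_wmult[of k] winv_winv[of k] inB_winv wmult_assoc[of k])
  also have "\<dots> = a"
    using assms by (simp add: wmult_winv_right[of k] wmult_wone_left)
  finally have a_eq: "a = wmult f (winv (wmult (winv a) f))" ..
  have b_eq: "b = wmult (wmult (winv a) f) (wmult l (wmult (winv f) (winv l)))"
    using assms(1-4) arg_cong[OF ab, of "wmult (winv a)"]
    by (simp add: wcomm_def wmult_assoc[of k] inB_winv inB_wmult wmult_winv_cancel_left[of k])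
  show ?thesis
    using assms(1,3,4) by (subst a_eq, subst b_eq)
      (simp add: wcomm_def winv_wone wmult_wone_left[of k] wmult_wone_right[of k]
                 wmult_assoc[of k] inB_winv inB_wmult)
qed

lemma Gset_inB: "x \<in> Gset k \<Longrightarrow> inB k x"
  by (induction k rule: Gset.induct) (auto simp: inB_wone)

lemma W_in_Gset_Suc_iff:
  "1 \<le> k \<Longrightarrow> W g1 g2 p \<in> Gset (Suc k) \<longleftrightarrow> inB k g1 \<and> inB k g2 \<and> wmult g1 g2 \<in> Gset k"
  by (cases k) auto

lemma in_parity_kernel_imp_wcomm:
  assumes "1 \<le> k" "x \<in> parity_kernel k"
  shows "\<exists>f l. inB k f \<and> l \<in> Gset k \<and> x = wcomm f l"
  using assms
proof (induction k arbitrary: x rule: nat_induct_at_least)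
  case base
  then have "x = wone 1"
    by (cases x) (auto simp: parity_kernel_def all_level_parity_W)
  then have "x = wcomm (wone 1) (wone 1)"
    by (simp add: wcomm_def)
  then show ?case
    using inB_wone[of 1] by (intro exI[of _ "wone 1"]) simp
next
  case (Suc k)
  then obtain a b where x: "x = W a b False" and a: "inB k a" and b: "inB k b"
    and ab: "wmult a b \<in> parity_kernel k"
    by (cases x) (simp add: parity_kernel_def, auto simp: W_in_parity_kernel_iff)
  obtain f l where f: "inB k f" and l: "l \<in> Gset k" and ab_eq: "wmult a b = wcomm f l"
    using Suc.IH[OF ab] by blast
  have "x = wcomm (W f (wmult (winv a) f) False) (W (wone k) l True)"
    using W_eq_wcomm[OF a b f Gset_inB[OF l] ab_eq] x by simp
  moreover have "W (wone k) l True \<in> Gset (Suc k)"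
    using Suc.hyps l Gset_inB[OF l] by (simp add: W_in_Gset_Suc_iff inB_wone wmult_wone_left)
  moreover have "inB (Suc k) (W f (wmult (winv a) f) False)"
    using a f by (simp add: inB_wmult inB_winv)
  ultimately show ?case
    by blast
qed

lemma parity_kernel_subset_commutators:
  assumes "1 \<le> k"
  shows "parity_kernel k \<subseteq>
    {f \<otimes>\<^bsub>Bgrp k\<^esub> l \<otimes>\<^bsub>Bgrp k\<^esub> inv\<^bsub>Bgrp k\<^esub> f \<otimes>\<^bsub>Bgrp k\<^esub> inv\<^bsub>Bgrp k\<^esub> l | f l. f \<in> carrier (Bgrp k) \<and> l \<in> Gset k}"
proof
  fix x assume "x \<in> parity_kernel k"
  then obtain f l where f: "inB k f" and l: "l \<in> Gset k" and "x = wcomm f l"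
    using in_parity_kernel_imp_wcomm[OF assms] by blast
  then have "x = f \<otimes>\<^bsub>Bgrp k\<^esub> l \<otimes>\<^bsub>Bgrp k\<^esub> inv\<^bsub>Bgrp k\<^esub> f \<otimes>\<^bsub>Bgrp k\<^esub> inv\<^bsub>Bgrp k\<^esub> l"
    using Gset_inB[OF l] by (simp add: inv_Bgrp wcomm_def)
  moreover have "f \<in> carrier (Bgrp k)"
    using f by simp
  ultimately show "x \<in> {f \<otimes>\<^bsub>Bgrp k\<^esub> l \<otimes>\<^bsub>Bgrp k\<^esub> inv\<^bsub>Bgrp k\<^esub> f \<otimes>\<^bsub>Bgrp k\<^esub> inv\<^bsub>Bgrp k\<^esub> l
                       | f l. f \<in> carrier (Bgrp k) \<and> l \<in> Gset k}"
    using l by blast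
qed

theorem mainTheorem14:
  fixes k :: nat
  assumes "k \<ge> 1"
  shows "derived (Bgrp k) (carrier (Bgrp k)) =
           {f \<otimes>\<^bsub>Bgrp k\<^esub> l \<otimes>\<^bsub>Bgrp k\<^esub> inv\<^bsub>Bgrp k\<^esub> f \<otimes>\<^bsub>Bgrp k\<^esub> inv\<^bsub>Bgrp k\<^esub> l
             | f l. f \<in> carrier (Bgrp k) \<and> l \<in> Gset k}
       \<and> derived (Bgrp k) (carrier (Bgrp k)) =
           {l \<otimes>\<^bsub>Bgrp k\<^esub> f \<otimes>\<^bsub>Bgrp k\<^esub> inv\<^bsub>Bgrp k\<^esub> l \<otimes>\<^bsub>Bgrp k\<^esub> inv\<^bsub>Bgrp k\<^esub> f
             | f l. f \<in> carrier (Bgrp k) \<and> l \<in> Gset k}"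
proof (rule group.derived_eq_commutator_sets[OF group_Bgrp])
  show "Gset k \<subseteq> carrier (Bgrp k)"
    using Gset_inB by auto
  show "derived (Bgrp k) (carrier (Bgrp k)) \<subseteq>
    {f \<otimes>\<^bsub>Bgrp k\<^esub> l \<otimes>\<^bsub>Bgrp k\<^esub> inv\<^bsub>Bgrp k\<^esub> f \<otimes>\<^bsub>Bgrp k\<^esub> inv\<^bsub>Bgrp k\<^esub> l | f l. f \<in> carrier (Bgrp k) \<and> l \<in> Gset k}"
    using derived_Bgrp_subset_parity_kernel parity_kernel_subset_commutators[OF assms]
    by (rule order_trans)
qed

end
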